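(* Let $f\in\mathbb B(X)$ be monotone and $x\in X$. Then $$\mathbf{Bz}_x(\omega_f)=\mathbf{Bz}_x(\nu_f)=\mathbf I_x(f).$$
   Context: $X$ is a fixed finite set of $n=|X|$ variables; $\mathbb B(X)$ is the set of Boolean functions $\{0,1\}^X\to\{0,1\}$; $f_{x/c}$ is $f$ with $x$ fixed to $c$; $f$ is monotone if $f_{x/1}\ge f_{x/0}$ pointwise for every $x$. For assignments $\mathbf u$ over $S$ and $\mathbf w$ over $X\setminus S$, $\mathbf u;\mathbf w$ is their concatenation. Influence: $\mathbf I_x(f)=\mathbb E[f_{x/1}\oplus f_{x/0}]$ (uniform distribution on $\{0,1\}^X$). For a cooperative game $v:2^X\to\mathbb R$, $\partial_xv(S)=v(S\cup\{x\})-v(S\setminus\{x\})$ and the Banzhaf value is $\mathbf{Bz}_x(v)=2^{-(n-1)}\sum_{S\subseteq X\setminus\{x\}}\partial_xv(S)$. Dominating CGM: $\omega_f(S)=1$ if $\exists\mathbf u\in\{0,1\}^S\ \forall\mathbf w\in\{0,1\}^{X\setminus S}: f(\mathbf u;\mathbf w)=1$, else $0$. Rectifying CGM: $\nu_f(S)=1$ if $\forall\mathbf w\in\{0,1\}^{X\setminus S}\ \exists\mathbf u\in\{0,1\}^S: f(\mathbf u;\mathbf w)=1$, else $0$. *)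

theory Defs
  imports Complex_Main "HOL-Library.FuncSet"
begin

text \<open>An assignment over S is an element of  PiE S (\<lambda>_. UNIV :: bool set)
  (True = 1, False = 0).  A Boolean function in B(X) is
  f :: ('a \<Rightarrow> bool) \<Rightarrow> bool, of which only the values on assignments over X matter.\<close>

abbreviation assignments :: "'a set \<Rightarrow> ('a \<Rightarrow> bool) set" where
  "assignments S \<equiv> S \<rightarrow>\<^sub>E (UNIV :: bool set)"

definition concat :: "'a set \<Rightarrow> ('a \<Rightarrow> bool) \<Rightarrow> ('a \<Rightarrow> bool) \<Rightarrow> ('a \<Rightarrow> bool)" where
  "concat S u w = (\<lambda>y. if y \<in> S then u y else w y)"

definition fix_var :: "(('a \<Rightarrow> bool) \<Rightarrow> bool) \<Rightarrow> 'a \<Rightarrow> bool \<Rightarrow> (('a \<Rightarrow> bool) \<Rightarrow> bool)" where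
  "fix_var f x c = (\<lambda>a. f (a(x := c)))"

definition monotone_bf :: "'a set \<Rightarrow> (('a \<Rightarrow> bool) \<Rightarrow> bool) \<Rightarrow> bool" where
  "monotone_bf X f \<longleftrightarrow>
     (\<forall>x\<in>X. \<forall>a\<in>assignments X. fix_var f x False a \<le> fix_var f x True a)"

definition influence :: "'a set \<Rightarrow> 'a \<Rightarrow> (('a \<Rightarrow> bool) \<Rightarrow> bool) \<Rightarrow> real" where
  "influence X x f =
     (\<Sum>a\<in>assignments X. (if fix_var f x True a \<noteq> fix_var f x False a then 1 else 0))
       / real (card (assignments X))"

definition partial_game :: "('a set \<Rightarrow> real) \<Rightarrow> 'a \<Rightarrow> 'a set \<Rightarrow> real" where
  "partial_game v x S = v (S \<union> {x}) - v (S - {x})"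

definition banzhaf :: "'a set \<Rightarrow> 'a \<Rightarrow> ('a set \<Rightarrow> real) \<Rightarrow> real" where
  "banzhaf X x v = (\<Sum>S\<in>Pow (X - {x}). partial_game v x S) / 2 ^ (card X - 1)"

definition dominating :: "'a set \<Rightarrow> (('a \<Rightarrow> bool) \<Rightarrow> bool) \<Rightarrow> 'a set \<Rightarrow> real" where
  "dominating X f S =
     (if \<exists>u\<in>assignments S. \<forall>w\<in>assignments (X - S). f (concat S u w) then 1 else 0)"

definition rectifying :: "'a set \<Rightarrow> (('a \<Rightarrow> bool) \<Rightarrow> bool) \<Rightarrow> 'a set \<Rightarrow> real" where
  "rectifying X f S =
     (if \<forall>w\<in>assignments (X - S). \<exists>u\<in>assignments S. f (concat S u w) then 1 else 0)"

end

theory Submission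
  imports Defs
begin

text \<open>For monotone \<open>f\<close> the best completion of a partial assignment is all ones, the worst
  is all zeros; so a coalition \<open>S\<close> both dominates and rectifies \<open>f\<close> exactly when \<open>f\<close> holds at
  the indicator assignment of \<open>S\<close>. Both games therefore coincide with the simple game
  \<open>S \<mapsto> f(1\<^sub>S)\<close>, whose marginal contributions at \<open>x\<close> are the indicators that \<open>x\<close> is pivotal;
  pairing each \<open>S \<subseteq> X - {x}\<close> with the two values of \<open>x\<close> enumerates \<open>{0,1}\<^sup>X\<close>, which
  turns the Banzhaf average into the influence.\<close>

definition indicator_assignment :: "'a set \<Rightarrow> 'a set \<Rightarrow> ('a \<Rightarrow> bool)" where
  "indicator_assignment X S = (\<lambda>y. if y \<in> X then y \<in> S else undefined)"

definition indicator_game :: "'a set \<Rightarrow> (('a \<Rightarrow> bool) \<Rightarrow> bool) \<Rightarrow> 'a set \<Rightarrow> real" where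
  "indicator_game X f S = (if f (indicator_assignment X S) then 1 else 0)"

lemma indicator_assignment_in: "indicator_assignment X S \<in> assignments X"
  by (auto simp: indicator_assignment_def)

lemma assignments_eqI:
  assumes "a \<in> assignments X" "b \<in> assignments X" "\<And>y. y \<in> X \<Longrightarrow> a y = b y"
  shows "a = b"
  using assms by (auto simp: PiE_def extensional_def)

lemma concat_in_assignments:
  assumes "S \<subseteq> X" "u \<in> assignments S" "w \<in> assignments (X - S)"
  shows "concat S u w \<in> assignments X"
  using assms by (auto simp: concat_def PiE_def extensional_def)

lemma monotone_bfD:
  assumes mono: "monotone_bf X f" and a: "a \<in> assignments X"
    and le: "\<forall>y\<in>X. a y \<longrightarrow> b y" and b: "b \<in> assignments X" and fin: "finite X"
    and fa: "f a"
  shows "f b"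
  using a le fa
  \<comment> \<open>raise the variables on which \<open>b\<close> exceeds \<open>a\<close> one at a time\<close>
proof (induction "card {y\<in>X. b y \<and> \<not> a y}" arbitrary: a)
  case 0
  then have "{y\<in>X. b y \<and> \<not> a y} = {}" using fin by simp
  then have "a = b" using "0.prems" b by (intro assignments_eqI) auto
  then show ?case using "0.prems" by simp
next
  case (Suc n)
  have "{y\<in>X. b y \<and> \<not> a y} \<noteq> {}" using Suc.hyps(2) by (metis card.empty Zero_neq_Suc)
  then obtain d where d: "d \<in> X" "b d" "\<not> a d" by blast
  let ?a = "a(d := True)"
  have "{y\<in>X. b y \<and> \<not> ?a y} = {y\<in>X. b y \<and> \<not> a y} - {d}" by auto
  then have "n = card {y\<in>X. b y \<and> \<not> ?a y}" using Suc.hyps(2) d fin by simp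
  moreover have "?a \<in> assignments X"
    using Suc.prems(1) d(1) by (auto simp: PiE_def extensional_def)
  moreover have "\<forall>y\<in>X. ?a y \<longrightarrow> b y" using Suc.prems(2) d(2) by auto
  moreover have "f ?a"
  proof -
    have "fix_var f d False a \<le> fix_var f d True a"
      using mono d(1) Suc.prems(1) unfolding monotone_bf_def by blast
    moreover have "a(d := False) = a" using d(3) fun_upd_idem[of a d False] by simp
    ultimately show ?thesis using Suc.prems(3) by (simp add: fix_var_def le_bool_def)
  qed
  ultimately show ?case using Suc.hyps(1) by blast
qed

lemma
  assumes fin: "finite X" and mono: "monotone_bf X f" and S: "S \<subseteq> X"
  shows dominating_eq_indicator_game: "dominating X f S = indicator_game X f S"
    and rectifying_eq_indicator_game: "rectifying X f S = indicator_game X f S"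
proof -
  let ?ind = "indicator_assignment X S"
  define ones where "ones = (\<lambda>y\<in>S. True)"
  define zeros where "zeros = (\<lambda>y\<in>X - S. False)"
  have ones: "ones \<in> assignments S" and zeros: "zeros \<in> assignments (X - S)"
    by (auto simp: ones_def zeros_def)
  have below: "f ?ind" if u: "u \<in> assignments S" and fu: "f (concat S u zeros)" for u
  proof -
    have le: "\<forall>y\<in>X. concat S u zeros y \<longrightarrow> ?ind y"
      by (simp add: concat_def zeros_def indicator_assignment_def)
    show ?thesis
      by (rule monotone_bfD[of X f "concat S u zeros" ?ind, OF mono
            concat_in_assignments[OF S u zeros] le indicator_assignment_in fin fu])
  qed
  have above: "f (concat S ones w)" if w: "w \<in> assignments (X - S)" and f1: "f ?ind" for w
  proof -
    have le: "\<forall>y\<in>X. ?ind y \<longrightarrow> concat S ones w y"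
      using S by (auto simp: concat_def ones_def indicator_assignment_def)
    show ?thesis
      by (rule monotone_bfD[of X f ?ind "concat S ones w", OF mono
            indicator_assignment_in le concat_in_assignments[OF S ones w] fin f1])
  qed
  have "(\<exists>u\<in>assignments S. \<forall>w\<in>assignments (X - S). f (concat S u w)) \<longleftrightarrow> f ?ind"
    using below above ones zeros by blast
  then show "dominating X f S = indicator_game X f S"
    by (simp add: dominating_def indicator_game_def)
  have "(\<forall>w\<in>assignments (X - S). \<exists>u\<in>assignments S. f (concat S u w)) \<longleftrightarrow> f ?ind"
    using below above ones zeros by blast
  then show "rectifying X f S = indicator_game X f S"
    by (simp add: rectifying_def indicator_game_def)
qed

lemma banzhaf_cong:
  assumes "x \<in> X" and "\<And>S. S \<subseteq> X \<Longrightarrow> v S = v' S"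
  shows "banzhaf X x v = banzhaf X x v'"
proof -
  have "partial_game v x S = partial_game v' x S" if "S \<in> Pow (X - {x})" for S
    using assms that by (simp add: partial_game_def subset_iff)
  then show ?thesis unfolding banzhaf_def by (metis (no_types, lifting) sum.cong)
qed

lemma bij_betw_split_assignments:
  assumes "x \<in> X"
  shows "bij_betw (\<lambda>(S, c). (indicator_assignment X S)(x := c))
           (Pow (X - {x}) \<times> UNIV) (assignments X)"
proof (rule bij_betw_byWitness[where f' = "\<lambda>a. ({y\<in>X - {x}. a y}, a x)"])
  have split_in: "(indicator_assignment X S)(x := c) \<in> assignments X" for S c
    using PiE_fun_upd[of c "\<lambda>_. UNIV" x "indicator_assignment X S" X,
        OF UNIV_I indicator_assignment_in] assms
    by (simp add: insert_absorb)
  then show "(\<lambda>(S, c). (indicator_assignment X S)(x := c)) ` (Pow (X - {x}) \<times> UNIV)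
      \<subseteq> assignments X"
    by auto
  show "\<forall>p\<in>Pow (X - {x}) \<times> UNIV. (\<lambda>a. ({y\<in>X - {x}. a y}, a x))
          ((\<lambda>(S, c). (indicator_assignment X S)(x := c)) p) = p"
    by (auto simp: indicator_assignment_def)
  show "\<forall>a\<in>assignments X. (\<lambda>(S, c). (indicator_assignment X S)(x := c))
          ({y\<in>X - {x}. a y}, a x) = a"
  proof
    fix a assume a: "a \<in> assignments X"
    show "(\<lambda>(S, c). (indicator_assignment X S)(x := c)) ({y\<in>X - {x}. a y}, a x) = a"
      by (rule assignments_eqI[OF _ a]) (simp add: split_in, simp add: indicator_assignment_def)
  qed
  show "(\<lambda>a. ({y\<in>X - {x}. a y}, a x)) ` assignments X \<subseteq> Pow (X - {x}) \<times> UNIV"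
    by auto
qed

lemma card_assignments:
  assumes "finite X" "x \<in> X"
  shows "card (assignments X) = 2 * 2 ^ (card X - 1)"
proof -
  have "card X > 0" using assms card_gt_0_iff by blast
  then have "card X = Suc (card X - 1)" by simp
  moreover have "card (assignments X) = 2 ^ card X" using assms(1) by (simp add: card_PiE)
  ultimately show ?thesis by (metis power_Suc)
qed

text \<open>Holds for every Boolean function; monotonicity only removes the absolute value.\<close>
lemma influence_eq_sum_abs_partial_game:
  assumes fin: "finite X" and x: "x \<in> X"
  shows "influence X x f
    = (\<Sum>S\<in>Pow (X - {x}). \<bar>partial_game (indicator_game X f) x S\<bar>) / 2 ^ (card X - 1)"
proof -
  define pivotal where
    "pivotal a = (if fix_var f x True a \<noteq> fix_var f x False a then 1 else 0 :: real)" for a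
  let ?g = "indicator_game X f"
  have pivotal_split: "pivotal ((indicator_assignment X S)(x := c)) = \<bar>partial_game ?g x S\<bar>"
    if "S \<in> Pow (X - {x})" for S c
  proof -
    have "(indicator_assignment X S)(x := c, x := True) = indicator_assignment X (S \<union> {x})"
         "(indicator_assignment X S)(x := c, x := False) = indicator_assignment X (S - {x})"
      using x that by (intro ext; auto simp: indicator_assignment_def)+
    then show ?thesis by (simp add: pivotal_def partial_game_def indicator_game_def fix_var_def)
  qed
  have "(\<Sum>a\<in>assignments X. pivotal a)
      = (\<Sum>(S, c)\<in>Pow (X - {x}) \<times> UNIV. pivotal ((indicator_assignment X S)(x := c)))"
    using sum.reindex_bij_betw[OF bij_betw_split_assignments[OF x], of pivotal]
    by (simp add: case_prod_beta)
  also have "\<dots> = (\<Sum>S\<in>Pow (X - {x}). \<Sum>c\<in>UNIV. pivotal ((indicator_assignment X S)(x := c)))"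
    by (simp add: sum.cartesian_product)
  also have "\<dots> = 2 * (\<Sum>S\<in>Pow (X - {x}). \<bar>partial_game ?g x S\<bar>)"
    by (simp add: pivotal_split UNIV_bool sum_distrib_left)
  finally show ?thesis
    unfolding influence_def pivotal_def[symmetric] card_assignments[OF fin x] by simp
qed

lemma partial_indicator_game_nonneg:
  assumes "finite X" "monotone_bf X f"
  shows "partial_game (indicator_game X f) x S \<ge> 0"
proof -
  have "f (indicator_assignment X (S \<union> {x}))" if "f (indicator_assignment X (S - {x}))"
    by (rule monotone_bfD[of X f "indicator_assignment X (S - {x})"
          "indicator_assignment X (S \<union> {x})", OF assms(2) indicator_assignment_in _
          indicator_assignment_in assms(1) that]) (auto simp: indicator_assignment_def)
  then show ?thesis by (simp add: partial_game_def indicator_game_def)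
qed

lemma banzhaf_indicator_game_eq_influence:
  assumes "finite X" "monotone_bf X f" "x \<in> X"
  shows "banzhaf X x (indicator_game X f) = influence X x f"
  using assms partial_indicator_game_nonneg[OF assms(1,2)]
  by (simp add: influence_eq_sum_abs_partial_game banzhaf_def)

theorem mainTheorem15:
  fixes X :: "'a set" and f :: "('a \<Rightarrow> bool) \<Rightarrow> bool" and x :: 'a
  assumes "finite X"
    and "monotone_bf X f"
    and "x \<in> X"
  shows "banzhaf X x (dominating X f) = influence X x f
       \<and> banzhaf X x (rectifying X f) = influence X x f"
proof -
  have "banzhaf X x (dominating X f) = banzhaf X x (indicator_game X f)"
    using assms by (intro banzhaf_cong) (simp_all add: dominating_eq_indicator_game)
  moreover have "banzhaf X x (rectifying X f) = banzhaf X x (indicator_game X f)"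
    using assms by (intro banzhaf_cong) (simp_all add: rectifying_eq_indicator_game)
  ultimately show ?thesis using banzhaf_indicator_game_eq_influence[OF assms] by simp
qed

end
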